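(* Consider Algorithm SS-SQP (described in the context) under the standing assumptions (A1), (A2). Let $\kappa_y>0$ be a constant with $\|y_k\|\le\kappa_y$ for all $k$, and let $\kappa_l>0$ be a constant with $\Delta l(x_k,\bar\tau_k,\bar g_k,\bar d_k)\ge\kappa_l\bar\tau_k(\|\bar d_k\|^2+\|c_k\|)$ for all $k$ (such constants exist). Then for all $k\in\mathbb{N}$: (1) if $\|\bar g_k-\nabla f_k\|\le\kappa_{\mathrm{FO}}\alpha_k\sqrt{\Delta l(x_k,\bar\tau_k,\bar g_k,\bar d_k)}$, then $$\bar\tau_k|\bar g_k^T\bar d_k|\le\left(\frac{\max\{\kappa_H,\kappa_y\}}{\kappa_l}+\frac{\sqrt{\bar\tau_k}(1+\kappa_H\zeta^{-1})\kappa_{\mathrm{FO}}\alpha_k}{\sqrt{\kappa_l}}\right)\Delta l(x_k,\bar\tau_k,\bar g_k,\bar d_k);$$ (2) if $\|\bar g_k-\nabla f_k\|\le\epsilon_g$, then $$\bar\tau_k|\bar g_k^T\bar d_k|\le\frac{\max\{\kappa_H,\kappa_y\}+1}{\kappa_l}\Delta l(x_k,\bar\tau_k,\bar g_k,\bar d_k)+\frac{\bar\tau_k(1+\kappa_H\zeta^{-1})^2}{4}\epsilon_g^2.$$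
   Context: Problem: $\min_{x\in\mathbb{R}^n}f(x)$ s.t. $c(x)=0$ with $f,c$ continuously differentiable, $c:\mathbb{R}^n\to\mathbb{R}^m$, $m\le n$; $\nabla f_k=\nabla f(x_k)$, $c_k=c(x_k)$, $J_k=\nabla c(x_k)^T$; $\|\cdot\|$ Euclidean norm. $\Delta l(x,\tau,g,d)=-\tau g^Td+\|c(x)\|_1$. $\kappa_{\mathrm{FO}}\ge0$ and $\epsilon_g\ge0$ are constants (parameters of the first-order oracle). Standing assumption (A1): there is an open convex set $\mathcal{X}$ containing all iterates and trial iterates; $f$ bounded below, $\nabla f$ $L$-Lipschitz and bounded, $c$ bounded, each $\nabla c_i$ Lipschitz and bounded on $\mathcal{X}$; singular values of $\nabla c(x)^T$ bounded away from zero on $\mathcal{X}$. (A2): $H_k$ symmetric, chosen independently of $\bar g_k$, $\|H_k\|\le\kappa_H$, $u^TH_ku\ge\zeta\|u\|^2$ for $u\in\mathrm{Null}(J_k)$, $\kappa_H,\zeta>0$. Algorithm SS-SQP: inputs $x_0$, $\bar\tau_{-1}>0$, $\alpha_{\max}\in(0,1]$, $\alpha_0\in(0,\alpha_{\max}]$, $\epsilon_f\ge0$, $\gamma,\theta,\sigma,\epsilon_\tau\in(0,1)$. At iteration $k$: random gradient estimate $\bar g_k$; solve $\begin{bmatrix}H_k & J_k^T\\ J_k&0\end{bmatrix}\begin{bmatrix}\bar d_k\\ \bar y_k\end{bmatrix}=-\begin{bmatrix}\bar g_k\\ c_k\end{bmatrix}$; $\bar\tau_k^{\rm trial}=\infty$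 if $\bar g_k^T\bar d_k+\max\{\bar d_k^TH_k\bar d_k,0\}\le0$, else $(1-\sigma)\|c_k\|_1/(\bar g_k^T\bar d_k+\max\{\bar d_k^TH_k\bar d_k,0\})$; $\bar\tau_k=\bar\tau_{k-1}$ if $\bar\tau_{k-1}\le\bar\tau_k^{\rm trial}$, else $\min\{(1-\epsilon_\tau)\bar\tau_{k-1},\bar\tau_k^{\rm trial}\}$; $x_k^+=x_k+\alpha_k\bar d_k$; with objective estimates $\bar f$ and $\bar\phi(x,\tau;\xi)=\tau\bar f(x;\xi)+\|c(x)\|_1$, set $x_{k+1}=x_k^+$, $\alpha_{k+1}=\min\{\alpha_{\max},\alpha_k/\gamma\}$ if $\bar\phi(x_k^+,\bar\tau_k;\xi_k^+)\le\bar\phi(x_k,\bar\tau_k;\xi_k^0)-\alpha_k\theta\Delta l(x_k,\bar\tau_k,\bar g_k,\bar d_k)+2\bar\tau_k\epsilon_f$, else $x_{k+1}=x_k$, $\alpha_{k+1}=\gamma\alpha_k$. The deterministic pair $(d_k,y_k)$ solves the same linear system with $\bar g_k$ replaced by $\nabla f_k$. *)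

theory Defs
  imports "HOL-Analysis.Analysis"
begin

text \<open>Vectors in R^n are real^'n, vectors in R^m are real^'m,
  Jacobians J(x) = nabla c(x)^T are m x n matrices real^'n^'m,
  Hessian approximations H_k are n x n matrices real^'n^'n.\<close>

definition l1norm :: "real^'m \<Rightarrow> real" where
  "l1norm v = (\<Sum>i\<in>UNIV. \<bar>v $ i\<bar>)"

definition delta_l :: "(real^'n \<Rightarrow> real^'m) \<Rightarrow> real^'n \<Rightarrow> real \<Rightarrow> real^'n \<Rightarrow> real^'n \<Rightarrow> real" where
  "delta_l c x tau g d = - tau * (g \<bullet> d) + l1norm (c x)"

definition tau_trial :: "real^'n^'n \<Rightarrow> real^'n \<Rightarrow> real^'n \<Rightarrow> real^'m \<Rightarrow> real \<Rightarrow> ereal" where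
  "tau_trial H g d ck sg =
     (let den = g \<bullet> d + max (d \<bullet> (H *v d)) 0
      in if den \<le> 0 then \<infinity> else ereal ((1 - sg) * l1norm ck / den))"

definition tau_update :: "real \<Rightarrow> ereal \<Rightarrow> real \<Rightarrow> real" where
  "tau_update prev trial eps_tau =
     (if ereal prev \<le> trial then prev else min ((1 - eps_tau) * prev) (real_of_ereal trial))"

text \<open>Merit estimate phibar(x,tau;xi) = tau * fbar(x;xi) + ||c(x)||_1,
  with fbar(x;xi) passed as its realized value.\<close>
definition phibar :: "(real^'n \<Rightarrow> real^'m) \<Rightarrow> real^'n \<Rightarrow> real \<Rightarrow> real \<Rightarrow> real" where
  "phibar c x tau fval = tau * fval + l1norm (c x)"

end

theory Submission
  imports Defs
begin

text \<open>Write \<open>e = gbar - gradf\<close> and \<open>u = dbar - d\<close>. Subtracting the two Newton--KKT systems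
  gives \<open>J u = 0\<close> and \<open>H u + J\<^sup>T (ybar - y) = -e\<close>, so the curvature of \<open>H\<close> on the null space
  of \<open>J\<close> yields \<open>\<zeta> \<parallel>u\<parallel> \<le> \<parallel>e\<parallel>\<close>. Expanding \<open>gbar\<^sup>T dbar\<close> through the deterministic system
  leaves the terms \<open>-dbar\<^sup>T H dbar + y\<^sup>T c + (H u)\<^sup>T dbar + e\<^sup>T dbar\<close>, whence
  \<open>|gbar\<^sup>T dbar| \<le> max \<kappa>\<^sub>H \<kappa>\<^sub>y (\<parallel>dbar\<parallel>\<^sup>2 + \<parallel>c\<parallel>) + (1 + \<kappa>\<^sub>H/\<zeta>) \<parallel>e\<parallel> \<parallel>dbar\<parallel>\<close>.
  Multiplying by \<open>\<tau>\<close> and using \<open>\<kappa>\<^sub>l \<tau> (\<parallel>dbar\<parallel>\<^sup>2 + \<parallel>c\<parallel>) \<le> \<Delta>l\<close>, the error term is controlled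
  either by \<open>\<tau> \<parallel>dbar\<parallel> \<le> \<surd>\<tau> \<surd>(\<Delta>l/\<kappa>\<^sub>l)\<close> (first claim) or by the AM-GM inequality
  \<open>K \<parallel>e\<parallel> \<parallel>dbar\<parallel> \<le> \<parallel>dbar\<parallel>\<^sup>2 + K\<^sup>2 \<parallel>e\<parallel>\<^sup>2/4\<close> with \<open>K = 1 + \<kappa>\<^sub>H/\<zeta>\<close> (second claim).\<close>

lemma l1norm_nonneg: "0 \<le> l1norm v"
  unfolding l1norm_def by (simp add: sum_nonneg)

lemma tau_update_nonneg:
  assumes "0 \<le> prev" "eps < 1" "sg < 1"
  shows "0 \<le> tau_update prev (tau_trial H g d ck sg) eps"
proof -
  have "0 \<le> real_of_ereal (tau_trial H g d ck sg)"
    unfolding tau_trial_def Let_def using l1norm_nonneg[of ck] assms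
    by (auto intro!: divide_nonneg_pos)
  then show ?thesis
    unfolding tau_update_def using assms by auto
qed

lemma tau_update_sequence_nonneg:
  fixes tau :: "nat \<Rightarrow> real"
  assumes "0 \<le> tau_init" "eps < 1" "sg < 1"
    and "\<And>k. tau k = tau_update (if k = 0 then tau_init else tau (k - 1))
                        (tau_trial (H k) (g k) (d k) (ck k) sg) eps"
  shows "0 \<le> tau k"
proof (induction k)
  case 0
  show ?case using assms(4)[of 0] tau_update_nonneg[OF assms(1-3)] by simp
next
  case (Suc k)
  show ?case using assms(4)[of "Suc k"] tau_update_nonneg[OF Suc assms(2,3)] by simp
qed

lemma norm_matrix_vector_le_onorm:
  fixes A :: "real^'n^'m"
  assumes "onorm (\<lambda>v. A *v v) \<le> K"
  shows "norm (A *v u) \<le> K * norm u"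
proof -
  have "norm (A *v u) \<le> onorm (\<lambda>v. A *v v) * norm u"
    by (rule onorm[OF matrix_vector_mul_bounded_linear])
  also have "\<dots> \<le> K * norm u"
    using assms by (simp add: mult_right_mono)
  finally show ?thesis .
qed

lemma onorm_matrix_vector_bound_nonneg:
  fixes A :: "real^'n^'m"
  assumes "onorm (\<lambda>v. A *v v) \<le> K"
  shows "0 \<le> K"
  using onorm_pos_le[OF matrix_vector_mul_bounded_linear] assms by (rule order_trans)

lemma null_space_component_bound:
  fixes H :: "real^'n^'n" and A :: "real^'n^'m"
  assumes "A *v u = 0" and "H *v u + transpose A *v w = - e"
    and curv: "zeta * (norm u)\<^sup>2 \<le> u \<bullet> (H *v u)"
  shows "zeta * norm u \<le> norm e"
proof -
  have "(transpose A *v w) \<bullet> u = 0"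
    using assms(1) by (simp add: transpose_matrix_vector dot_lmul_matrix)
  then have "u \<bullet> (H *v u) = - (e \<bullet> u)"
    using arg_cong[OF assms(2), of "\<lambda>v. v \<bullet> u"]
    by (simp add: inner_add_left inner_add_right inner_commute)
  then have "zeta * (norm u)\<^sup>2 \<le> norm e * norm u"
    using curv Cauchy_Schwarz_ineq2[of e u] by linarith
  then show ?thesis
    by (cases "norm u = 0") (auto simp: power2_eq_square)
qed

lemma inner_direction_split:
  fixes H :: "real^'n^'n" and A :: "real^'n^'m"
  assumes "A *v db = - cx" and "H *v d + transpose A *v y = - G"
  shows "g \<bullet> db = - ((H *v db) \<bullet> db) + y \<bullet> cx + (H *v (db - d)) \<bullet> db + (g - G) \<bullet> db"
proof -
  have "G \<bullet> db = - ((H *v d) \<bullet> db) - y \<bullet> (A *v db)"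
    using arg_cong[OF assms(2), of "\<lambda>v. v \<bullet> db"]
    by (simp add: inner_add_left transpose_matrix_vector dot_lmul_matrix)
  then show ?thesis
    using assms(1) by (simp add: matrix_vector_mult_diff_distrib inner_diff_left)
qed

lemma inner_stochastic_direction_bound:
  fixes H :: "real^'n^'n" and A :: "real^'n^'m"
  assumes sys_bar: "H *v db + transpose A *v yb = - g" "A *v db = - cx"
    and sys_det: "H *v d + transpose A *v y = - G" "A *v d = - cx"
    and curv: "\<And>u. A *v u = 0 \<Longrightarrow> zeta * (norm u)\<^sup>2 \<le> u \<bullet> (H *v u)"
    and zeta: "0 < zeta"
    and H_bdd: "onorm (\<lambda>v. H *v v) \<le> kH" and y_bdd: "norm y \<le> ky"
  shows "\<bar>g \<bullet> db\<bar> \<le> max kH ky * ((norm db)\<^sup>2 + norm cx) + (1 + kH / zeta) * norm (g - G) * norm db"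
proof -
  define u where "u = db - d"
  define e where "e = g - G"
  have kH: "0 \<le> kH"
    using H_bdd by (rule onorm_matrix_vector_bound_nonneg)
  have Au: "A *v u = 0"
    using sys_bar(2) sys_det(2) by (simp add: u_def matrix_vector_mult_diff_distrib)
  have "H *v u + transpose A *v (yb - y) = - e"
    using sys_bar(1) sys_det(1)
    by (simp add: u_def e_def matrix_vector_mult_diff_distrib algebra_simps)
  then have "zeta * norm u \<le> norm e"
    using null_space_component_bound[OF Au _ curv[OF Au]] by blast
  then have "kH * norm u \<le> kH / zeta * norm e"
    using kH zeta by (simp add: field_simps mult_left_mono)
  then have Hu: "\<bar>(H *v u) \<bullet> db\<bar> \<le> kH / zeta * norm e * norm db"
    using Cauchy_Schwarz_ineq2[of "H *v u" db] norm_matrix_vector_le_onorm[OF H_bdd, of u]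
    by (smt (verit) mult_right_mono norm_ge_zero)
  have Hdb: "\<bar>(H *v db) \<bullet> db\<bar> \<le> kH * (norm db)\<^sup>2"
    using Cauchy_Schwarz_ineq2[of "H *v db" db] norm_matrix_vector_le_onorm[OF H_bdd, of db]
    by (smt (verit) mult_right_mono norm_ge_zero power2_eq_square mult.assoc)
  have yc: "\<bar>y \<bullet> cx\<bar> \<le> ky * norm cx"
    using Cauchy_Schwarz_ineq2[of y cx] y_bdd by (smt (verit) mult_right_mono norm_ge_zero)
  have "kH * (norm db)\<^sup>2 + ky * norm cx \<le> max kH ky * ((norm db)\<^sup>2 + norm cx)"
    by (simp add: distrib_left mult_right_mono add_mono)
  then show ?thesis
    using inner_direction_split[OF sys_bar(2) sys_det(1), of g] Hu Hdb yc
      Cauchy_Schwarz_ineq2[of e db]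
    unfolding u_def e_def by (simp add: algebra_simps)
qed

lemma scaled_bound_by_model_reduction:
  fixes t kl M D C Dl A R :: real
  assumes "0 \<le> t" "0 < kl" "0 \<le> M"
    and "kl * t * (D\<^sup>2 + C) \<le> Dl" and "A \<le> M * (D\<^sup>2 + C) + R"
  shows "t * A \<le> M / kl * Dl + t * R"
proof -
  have "t * (D\<^sup>2 + C) \<le> Dl / kl"
    using assms(2,4) by (simp add: field_simps mult.commute)
  then have "M * (t * (D\<^sup>2 + C)) \<le> M * (Dl / kl)"
    using assms(3) by (rule mult_left_mono)
  moreover have "t * A \<le> t * (M * (D\<^sup>2 + C) + R)"
    using assms(5,1) by (rule mult_left_mono)
  ultimately show ?thesis
    by (simp add: algebra_simps)
qed

lemma model_reduction_bounds_scaled_square: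
  fixes t kl D C Dl :: real
  assumes "0 \<le> t" "0 < kl" "0 \<le> C" and "kl * t * (D\<^sup>2 + C) \<le> Dl"
  shows "t * D\<^sup>2 \<le> Dl / kl"
proof -
  have "kl * (t * D\<^sup>2) \<le> kl * t * (D\<^sup>2 + C)"
    using assms(1-3) by (simp add: algebra_simps)
  then show ?thesis
    using assms(2,4) by (simp add: field_simps)
qed

lemma scaled_first_order_error_bound:
  fixes t kl K D C Dl E b :: real
  assumes "0 \<le> t" "0 < kl" "0 \<le> C" "0 \<le> K" "0 \<le> D" "0 \<le> E"
    and model: "kl * t * (D\<^sup>2 + C) \<le> Dl" and error: "E \<le> b * sqrt Dl"
  shows "t * (K * E * D) \<le> sqrt t * K * b / sqrt kl * Dl"
proof -
  have "0 \<le> Dl"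
    using assms(1-3) model by (smt (verit) mult_nonneg_nonneg zero_le_power2)
  have "t * D = sqrt t * sqrt (t * D\<^sup>2)"
    using assms(1,5) by (simp add: real_sqrt_mult)
  also have "\<dots> \<le> sqrt t * sqrt (Dl / kl)"
    using model_reduction_bounds_scaled_square[OF assms(1-3) model] assms(1)
    by (intro mult_left_mono) auto
  finally have tD: "t * D \<le> sqrt t * sqrt (Dl / kl)" .
  have "t * (K * E * D) = K * E * (t * D)"
    by simp
  also have "\<dots> \<le> K * (b * sqrt Dl) * (sqrt t * sqrt (Dl / kl))"
  proof (rule mult_mono)
    show "K * E \<le> K * (b * sqrt Dl)"
      using error assms(4) by (rule mult_left_mono)
  qed (use assms(1,4-6) error tD in auto)
  also have "\<dots> = sqrt t * K * b / sqrt kl * (sqrt Dl * sqrt Dl)"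
    by (simp add: real_sqrt_divide)
  finally show ?thesis
    using \<open>0 \<le> Dl\<close> by simp
qed

lemma scaled_bias_error_bound:
  fixes t kl K D C Dl E eps :: real
  assumes "0 \<le> t" "0 < kl" "0 \<le> C" "0 \<le> E"
    and model: "kl * t * (D\<^sup>2 + C) \<le> Dl" and error: "E \<le> eps"
  shows "t * (K * E * D) \<le> Dl / kl + t * K\<^sup>2 / 4 * eps\<^sup>2"
proof -
  have "0 \<le> (D - K * E / 2)\<^sup>2"
    by simp
  then have "K * E * D \<le> D\<^sup>2 + K\<^sup>2 / 4 * E\<^sup>2"
    by (simp add: power2_eq_square algebra_simps)
  also have "\<dots> \<le> D\<^sup>2 + K\<^sup>2 / 4 * eps\<^sup>2"
    using assms(4) error by (simp add: power_mono mult_left_mono)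
  finally have "t * (K * E * D) \<le> t * D\<^sup>2 + t * K\<^sup>2 / 4 * eps\<^sup>2"
    using assms(1) mult_left_mono by (fastforce simp: algebra_simps)
  then show ?thesis
    using model_reduction_bounds_scaled_square[OF assms(1-3) model] by linarith
qed

lemma stochastic_step_inner_product_bounds:
  fixes H :: "real^'n^'n" and A :: "real^'n^'m"
  assumes sys_bar: "H *v db + transpose A *v yb = - g" "A *v db = - cx"
    and sys_det: "H *v d + transpose A *v y = - G" "A *v d = - cx"
    and curv: "\<And>u. A *v u = 0 \<Longrightarrow> zeta * (norm u)\<^sup>2 \<le> u \<bullet> (H *v u)"
    and zeta: "0 < zeta"
    and H_bdd: "onorm (\<lambda>v. H *v v) \<le> kH" and y_bdd: "norm y \<le> ky"
    and tau: "0 \<le> t" and kl: "0 < kl"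
    and model: "kl * t * ((norm db)\<^sup>2 + norm cx) \<le> Dl"
  shows "(norm (g - G) \<le> kFO * a * sqrt Dl
          \<longrightarrow> t * \<bar>g \<bullet> db\<bar> \<le> (max kH ky / kl + sqrt t * (1 + kH / zeta) * kFO * a / sqrt kl) * Dl)
      \<and> (norm (g - G) \<le> eps
          \<longrightarrow> t * \<bar>g \<bullet> db\<bar> \<le> (max kH ky + 1) / kl * Dl + t * (1 + kH / zeta)\<^sup>2 / 4 * eps\<^sup>2)"
proof -
  define K where "K = 1 + kH / zeta"
  define M where "M = max kH ky"
  define e where "e = norm (g - G)"
  have kH: "0 \<le> kH"
    using H_bdd by (rule onorm_matrix_vector_bound_nonneg)
  then have K: "0 \<le> K" and M: "0 \<le> M"
    using zeta by (simp_all add: K_def M_def)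
  have "\<bar>g \<bullet> db\<bar> \<le> M * ((norm db)\<^sup>2 + norm cx) + K * e * norm db"
    unfolding M_def K_def e_def
    by (rule inner_stochastic_direction_bound[OF sys_bar sys_det curv zeta H_bdd y_bdd])
  then have reduced: "t * \<bar>g \<bullet> db\<bar> \<le> M / kl * Dl + t * (K * e * norm db)"
    using scaled_bound_by_model_reduction[OF tau kl M model] by blast
  have "t * \<bar>g \<bullet> db\<bar> \<le> (M / kl + sqrt t * K * kFO * a / sqrt kl) * Dl"
    if "e \<le> kFO * a * sqrt Dl"
    using reduced scaled_first_order_error_bound[OF tau kl norm_ge_zero K norm_ge_zero _ model that]
    by (simp add: e_def algebra_simps)
  moreover have "t * \<bar>g \<bullet> db\<bar> \<le> (M + 1) / kl * Dl + t * K\<^sup>2 / 4 * eps\<^sup>2"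
    if "e \<le> eps"
    using reduced scaled_bias_error_bound[where K = K, OF tau kl norm_ge_zero _ model that]
    by (simp add: e_def add_divide_distrib algebra_simps)
  ultimately show ?thesis
    unfolding K_def M_def e_def by blast
qed

theorem lemma3p15:
  fixes f :: "real^'n \<Rightarrow> real" and gradf :: "real^'n \<Rightarrow> real^'n"
    and c :: "real^'n \<Rightarrow> real^'m" and J :: "real^'n \<Rightarrow> real^'n^'m"
    and X :: "(real^'n) set"
    and L :: real
    and H :: "nat \<Rightarrow> real^'n^'n" and kappa_H zeta :: real
    and x :: "nat \<Rightarrow> real^'n" and alpha :: "nat \<Rightarrow> real"
    and gbar dbar d :: "nat \<Rightarrow> real^'n" and ybar y :: "nat \<Rightarrow> real^'m"
    and taubar :: "nat \<Rightarrow> real"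
    and fbar0 fbarplus :: "nat \<Rightarrow> real"
    and tau_m1 alpha_max eps_f gamma theta sgm eps_tau :: real
    and kappa_FO eps_g kappa_y kappa_l :: real
  assumes mn: "CARD('m) \<le> CARD('n)"
    \<comment> \<open>(A1)\<close>
    and X_open: "open X" and X_convex: "convex X"
    and x_in: "\<And>k. x k \<in> X" and xplus_in: "\<And>k. x k + alpha k *\<^sub>R dbar k \<in> X"
    and f_grad: "\<And>z. z \<in> X \<Longrightarrow> (f has_derivative (\<lambda>h. gradf z \<bullet> h)) (at z)"
    and c_jac: "\<And>z. z \<in> X \<Longrightarrow> (c has_derivative (\<lambda>h. J z *v h)) (at z)"
    and f_bdd_below: "\<exists>B. \<forall>z\<in>X. B \<le> f z"
    and L_pos: "L > 0"
    and gradf_lip: "\<And>z w. z \<in> X \<Longrightarrow> w \<in> X \<Longrightarrow> norm (gradf z - gradf w) \<le> L * norm (z - w)"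
    and gradf_bdd: "\<exists>B. \<forall>z\<in>X. norm (gradf z) \<le> B"
    and c_bdd: "\<exists>B. \<forall>z\<in>X. norm (c z) \<le> B"
    and gradc_lip: "\<exists>Lc. \<forall>i. \<forall>z\<in>X. \<forall>w\<in>X. norm (J z $ i - J w $ i) \<le> Lc * norm (z - w)"
    and gradc_bdd: "\<exists>B. \<forall>i. \<forall>z\<in>X. norm (J z $ i) \<le> B"
    and sing_vals: "\<exists>s>0. \<forall>z\<in>X. \<forall>v. s * norm v \<le> norm (transpose (J z) *v v)"
    \<comment> \<open>(A2)\<close>
    and kH_pos: "kappa_H > 0" and zeta_pos: "zeta > 0"
    and H_sym: "\<And>k. transpose (H k) = H k"
    and H_bdd: "\<And>k. onorm (\<lambda>v. H k *v v) \<le> kappa_H"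
    and H_curv: "\<And>k u. J (x k) *v u = 0 \<Longrightarrow> u \<bullet> (H k *v u) \<ge> zeta * (norm u)\<^sup>2"
    \<comment> \<open>algorithm parameters\<close>
    and tau_m1_pos: "tau_m1 > 0"
    and alpha_max: "0 < alpha_max" "alpha_max \<le> 1"
    and alpha0: "0 < alpha 0" "alpha 0 \<le> alpha_max"
    and eps_f: "eps_f \<ge> 0"
    and params: "0 < gamma" "gamma < 1" "0 < theta" "theta < 1" "0 < sgm" "sgm < 1"
                "0 < eps_tau" "eps_tau < 1"
    and kFO: "kappa_FO \<ge> 0" and epsg: "eps_g \<ge> 0"
    \<comment> \<open>stochastic search direction\<close>
    and sys_bar: "\<And>k. H k *v dbar k + transpose (J (x k)) *v ybar k = - gbar k"
                 "\<And>k. J (x k) *v dbar k = - c (x k)"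
    \<comment> \<open>merit parameter update\<close>
    and tau_upd: "\<And>k. taubar k = tau_update (if k = 0 then tau_m1 else taubar (k - 1))
                       (tau_trial (H k) (gbar k) (dbar k) (c (x k)) sgm) eps_tau"
    \<comment> \<open>step acceptance and step size update\<close>
    and step: "\<And>k. if phibar c (x k + alpha k *\<^sub>R dbar k) (taubar k) (fbarplus k)
                      \<le> phibar c (x k) (taubar k) (fbar0 k)
                         - alpha k * theta * delta_l c (x k) (taubar k) (gbar k) (dbar k)
                         + 2 * taubar k * eps_f
                   then x (Suc k) = x k + alpha k *\<^sub>R dbar k \<and> alpha (Suc k) = min alpha_max (alpha k / gamma)
                   else x (Suc k) = x k \<and> alpha (Suc k) = gamma * alpha k"
    \<comment> \<open>deterministic search direction\<close>
    and sys_det: "\<And>k. H k *v d k + transpose (J (x k)) *v y k = - gradf (x k)"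
                 "\<And>k. J (x k) *v d k = - c (x k)"
    \<comment> \<open>constants of the lemma\<close>
    and ky_pos: "kappa_y > 0" and y_bdd: "\<And>k. norm (y k) \<le> kappa_y"
    and kl_pos: "kappa_l > 0"
    and dl_lower: "\<And>k. delta_l c (x k) (taubar k) (gbar k) (dbar k)
                        \<ge> kappa_l * taubar k * ((norm (dbar k))\<^sup>2 + norm (c (x k)))"
  shows "\<forall>k.
      (norm (gbar k - gradf (x k)) \<le> kappa_FO * alpha k * sqrt (delta_l c (x k) (taubar k) (gbar k) (dbar k))
        \<longrightarrow> taubar k * \<bar>gbar k \<bullet> dbar k\<bar>
            \<le> (max kappa_H kappa_y / kappa_l
                + sqrt (taubar k) * (1 + kappa_H / zeta) * kappa_FO * alpha k / sqrt kappa_l)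
              * delta_l c (x k) (taubar k) (gbar k) (dbar k))
    \<and> (norm (gbar k - gradf (x k)) \<le> eps_g
        \<longrightarrow> taubar k * \<bar>gbar k \<bullet> dbar k\<bar>
            \<le> (max kappa_H kappa_y + 1) / kappa_l * delta_l c (x k) (taubar k) (gbar k) (dbar k)
              + taubar k * (1 + kappa_H / zeta)\<^sup>2 / 4 * eps_g\<^sup>2)"
proof -
  have tau: "\<And>k. 0 \<le> taubar k"
    using tau_update_sequence_nonneg[OF less_imp_le[OF tau_m1_pos] params(8,6) tau_upd] .
  show ?thesis
    by (intro allI stochastic_step_inner_product_bounds[OF sys_bar sys_det H_curv zeta_pos H_bdd y_bdd
          tau kl_pos dl_lower])
qed

end
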